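(* Let $f:\{0,\dots,r-1\}^n\to\mathbb{R}$ be an $r$-valued fitness function with a neutral position $i\in\{1,\dots,n\}$. Consider the $r$-cGA optimizing $f$ with population size $K$. Then for every $j\in\{0,\dots,r-1\}$ and $T\in\mathbb{N}$, \[\Pr\left[\max_{t\in\{0,\dots,T\}}\left|p^{(t)}_{i,j}-p^{(0)}_{i,j}\right|\geq \frac{1}{2r}\right]\leq 2\exp\left(-\frac{K^2}{8Tr^2}\right).\]
   Context: Let $n\geq 1$, $r\geq 2$ be integers and $K>0$. The $r$-cGA maximizing $f$ maintains frequencies $p^{(t)}_{i,j}$ ($i\in\{1,\dots,n\}$, $j\in\{0,\dots,r-1\}$), initialized to $p^{(0)}_{i,j}=1/r$. In iteration $t$ it samples $x,y\in\{0,\dots,r-1\}^n$ independently, each position $i$ independently with $\Pr[x_i=j]=p^{(t)}_{i,j}$; if $f(x)<f(y)$ it swaps $x$ and $y$; then it sets $p^{(t+1)}_{i,j}=p^{(t)}_{i,j}+\frac1K(\mathbf{1}[x_i=j]-\mathbf{1}[y_i=j])$ for all $i,j$, with no margins restricting frequencies. A position $i$ is neutral for $f$ if for all $x,x'$ agreeing on all positions other than $i$ we have $f(x)=f(x')$. *)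

theory Defs
  imports "HOL-Probability.Probability"
begin

text \<open>Frequencies: a function p :: nat => nat => real, p i j for position i < n and value j < r.
  Search points: functions x :: nat => nat with x k < r for k < n and x k = 0 for k >= n.\<close>

type_synonym freqs = "nat \<Rightarrow> nat \<Rightarrow> real"
type_synonym point = "nat \<Rightarrow> nat"

definition search_space :: "nat \<Rightarrow> nat \<Rightarrow> point set" where
  "search_space r n = {x. (\<forall>k<n. x k < r) \<and> (\<forall>k. n \<le> k \<longrightarrow> x k = 0)}"

definition neutral_pos :: "nat \<Rightarrow> nat \<Rightarrow> (point \<Rightarrow> real) \<Rightarrow> nat \<Rightarrow> bool" where
  "neutral_pos r n f i \<longleftrightarrow>
     (\<forall>x\<in>search_space r n. \<forall>x'\<in>search_space r n.
        (\<forall>k<n. k \<noteq> i \<longrightarrow> x k = x' k) \<longrightarrow> f x = f x')"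

definition valid_row :: "nat \<Rightarrow> freqs \<Rightarrow> nat \<Rightarrow> bool" where
  "valid_row r p i \<longleftrightarrow> (\<forall>j<r. 0 \<le> p i j) \<and> (\<Sum>j<r. p i j) = 1"

text \<open>Distribution of one position: Pr[x_i = j] = p i j (j < r) when the row is a probability
  vector; otherwise (which can only happen without margins) uniform over {0..r-1} as a convention.\<close>
definition sample_pos :: "nat \<Rightarrow> freqs \<Rightarrow> nat \<Rightarrow> nat pmf" where
  "sample_pos r p i =
     (if valid_row r p i then embed_pmf (\<lambda>j. if j < r then p i j else 0)
      else pmf_of_set {..<r})"

definition sample :: "nat \<Rightarrow> nat \<Rightarrow> freqs \<Rightarrow> point pmf" where
  "sample r n p = Pi_pmf {..<n} 0 (\<lambda>i. sample_pos r p i)"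

definition cga_step :: "nat \<Rightarrow> nat \<Rightarrow> real \<Rightarrow> (point \<Rightarrow> real) \<Rightarrow> freqs \<Rightarrow> freqs pmf" where
  "cga_step r n K f p =
     do { x \<leftarrow> sample r n p;
          y \<leftarrow> sample r n p;
          let (x', y') = (if f x < f y then (y, x) else (x, y));
          return_pmf (\<lambda>i j. p i j + (of_bool (x' i = j) - of_bool (y' i = j)) / K) }"

definition init_freqs :: "nat \<Rightarrow> freqs" where
  "init_freqs r = (\<lambda>i j. 1 / real r)"

fun cga_run :: "nat \<Rightarrow> nat \<Rightarrow> real \<Rightarrow> (point \<Rightarrow> real) \<Rightarrow> nat \<Rightarrow> freqs list pmf" where
  "cga_run r n K f 0 = return_pmf [init_freqs r]"
| "cga_run r n K f (Suc T) =
     do { hs \<leftarrow> cga_run r n K f T;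
          p' \<leftarrow> cga_step r n K f (last hs);
          return_pmf (hs @ [p']) }"

end

theory Submission
  imports Defs
begin

text \<open>At a neutral position i the selection cannot see the i-th entries: writing the two
  samples as g(i := a) and g'(i := b), whether they are swapped depends only on g and g', which
  are independent of the i.i.d. entries a and b. Hence one step changes p_{i,j} by
  w ([a = j] - [b = j]) / K with a sign w that is independent of (a, b), and by a cosh estimate
  the moment generating function of this increment is at most exp (u^2 / (2 K^2)).
  Stopping the deviation \<sigma> (p^(t)_{i,j} - p^(0)_{i,j}) as soon as it reaches l = 1 / (2 r)
  reduces the maximal inequality to a tail bound for one variable, whose moment generating
  function is then at most exp (T s^2 / (2 K^2)); Chernoff's inequality and a union bound over
  \<sigma> = 1, -1 finish the proof.\<close>

lemma cosh_le_exp_half_square: "cosh x \<le> exp (x\<^sup>2 / 2 :: real)"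
proof -
  define w where "w = \<bar>x\<bar>"
  have "- (2 * w) * (1 / 2) + ln (1 + 1 / 2 * (exp (2 * w) - 1)) \<le> (2 * w)\<^sup>2 / 8"
    using Hoeffdings_lemma_aux[of "2 * w" "1 / 2"] by (simp add: w_def)
  moreover have "1 + 1 / 2 * (exp (2 * w) - 1) = exp w * cosh w"
    by (simp add: cosh_field_def field_simps flip: exp_add)
  ultimately have "ln (cosh w) \<le> w\<^sup>2 / 2"
    by (simp add: ln_mult power2_eq_square)
  then have "cosh w \<le> exp (w\<^sup>2 / 2)"
    by (metis cosh_real_pos exp_le_cancel_iff exp_ln)
  then show ?thesis by (simp add: w_def)
qed

lemma bernoulli_mgf_product_le:
  fixes q v :: real
  assumes "0 \<le> q" "q \<le> 1"
  shows "(1 - q + q * exp v) * (1 - q + q * exp (- v)) \<le> exp (v\<^sup>2 / 2)"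
proof -
  have "(1 - q + q * exp v) * (1 - q + q * exp (- v)) = 1 + 2 * (q * (1 - q)) * (cosh v - 1)"
    by (simp add: cosh_field_def field_simps flip: exp_add)
  also have "\<dots> \<le> 1 + 2 * (1 / 4) * (cosh v - 1)"
    using mult_const_minus_self_real_le[of q 1] cosh_real_ge_1[of v]
    by (intro add_left_mono mult_left_mono mult_right_mono) auto
  also have "\<dots> \<le> cosh v"
    using cosh_real_ge_1[of v] by (simp add: field_simps)
  also have "\<dots> \<le> exp (v\<^sup>2 / 2)"
    by (rule cosh_le_exp_half_square)
  finally show ?thesis .
qed

lemma nn_integral_pmf_swap:
  "(\<integral>\<^sup>+x. \<integral>\<^sup>+y. h x y \<partial>B \<partial>A) = (\<integral>\<^sup>+y. \<integral>\<^sup>+x. h x y \<partial>A \<partial>B)"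
  for A B :: "_ pmf"
proof -
  have "(\<integral>\<^sup>+x. \<integral>\<^sup>+y. h x y \<partial>B \<partial>A) = (\<integral>\<^sup>+z. h (fst z) (snd z) \<partial>pair_pmf A B)"
    by (simp add: nn_integral_pair_pmf')
  also have "\<dots> = (\<integral>\<^sup>+z. h (snd z) (fst z) \<partial>pair_pmf B A)"
    by (subst pair_commute_pmf) (simp add: case_prod_beta)
  also have "\<dots> = (\<integral>\<^sup>+y. \<integral>\<^sup>+x. h x y \<partial>A \<partial>B)"
    by (simp add: nn_integral_pair_pmf')
  finally show ?thesis .
qed

lemma nn_integral_exp_indicator_pmf:
  "(\<integral>\<^sup>+a. ennreal (exp (v * of_bool (a = j))) \<partial>P) = ennreal (1 - pmf P j + pmf P j * exp v)"
  for P :: "'a pmf"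
proof -
  have split: "ennreal (exp (v * of_bool (a = j))) =
      ennreal (exp v) * indicator {j} a + indicator (- {j}) a" for a
    by (auto simp: indicator_def)
  have compl: "emeasure (measure_pmf P) (- {j}) = ennreal (1 - pmf P j)"
    using measure_pmf.prob_compl[of "{j}" P]
    by (simp add: measure_pmf.emeasure_eq_measure measure_pmf_single Compl_eq_Diff_UNIV)
  have "(\<integral>\<^sup>+a. ennreal (exp (v * of_bool (a = j))) \<partial>P) =
      ennreal (exp v) * ennreal (pmf P j) + ennreal (1 - pmf P j)"
    unfolding split
    by (subst nn_integral_add) (auto simp: nn_integral_cmult_indicator emeasure_pmf_single compl)
  also have "\<dots> = ennreal (1 - pmf P j + pmf P j * exp v)"
    using pmf_le_1[of P j]
    by (simp add: ennreal_mult[symmetric] ennreal_plus[symmetric] algebra_simps del: ennreal_plus)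
  finally show ?thesis .
qed

lemma nn_integral_exp_indicator_diff_pmf_le:
  "(\<integral>\<^sup>+a. \<integral>\<^sup>+b. ennreal (exp (v * (of_bool (a = j) - of_bool (b = j)))) \<partial>P \<partial>P)
     \<le> ennreal (exp (v\<^sup>2 / 2))"
  for P :: "'a pmf"
proof -
  have factor: "ennreal (exp (v * (of_bool (a = j) - of_bool (b = j)))) =
      ennreal (exp (v * of_bool (a = j))) * ennreal (exp (- v * of_bool (b = j)))" for a b
    by (simp add: ennreal_mult[symmetric] algebra_simps flip: exp_add)
  have "(\<integral>\<^sup>+a. \<integral>\<^sup>+b. ennreal (exp (v * (of_bool (a = j) - of_bool (b = j)))) \<partial>P \<partial>P) =
      (\<integral>\<^sup>+a. ennreal (exp (v * of_bool (a = j))) \<partial>P) *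
      (\<integral>\<^sup>+b. ennreal (exp (- v * of_bool (b = j))) \<partial>P)"
    unfolding factor by (simp add: nn_integral_cmult nn_integral_multc)
  also have "\<dots> = ennreal ((1 - pmf P j + pmf P j * exp v) * (1 - pmf P j + pmf P j * exp (- v)))"
    unfolding nn_integral_exp_indicator_pmf using pmf_le_1[of P j]
    by (intro ennreal_mult[symmetric] add_nonneg_nonneg) auto
  also have "\<dots> \<le> ennreal (exp (v\<^sup>2 / 2))"
    using bernoulli_mgf_product_le[of "pmf P j" v] pmf_le_1[of P j] by (intro ennreal_leI) simp
  finally show ?thesis .
qed

lemma set_pmf_sample_pos:
  assumes "r \<ge> 1"
  shows "set_pmf (sample_pos r p k) \<subseteq> {..<r}"
proof (cases "valid_row r p k")
  case True
  define g where "g = (\<lambda>j. if j < r then p k j else 0)"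
  have nonneg: "0 \<le> g x" for x
    using True unfolding g_def valid_row_def by auto
  have "(\<integral>\<^sup>+x. ennreal (g x) \<partial>count_space UNIV) = (\<Sum>x<r. ennreal (g x))"
    by (rule nn_integral_count_space') (auto simp: g_def)
  also have "\<dots> = ennreal (\<Sum>x<r. g x)"
    using nonneg by (intro sum_ennreal) auto
  also have "(\<Sum>x<r. g x) = 1"
    using True unfolding valid_row_def g_def by simp
  finally have "set_pmf (embed_pmf g) = {x. g x \<noteq> 0}"
    using nonneg by (intro set_embed_pmf) auto
  then show ?thesis
    using True by (auto simp: sample_pos_def g_def)
next
  case False
  then show ?thesis
    using assms by (simp add: sample_pos_def set_pmf_of_set lessThan_empty_iff)
qed

lemma set_pmf_Pi_pmf_sample_pos:
  assumes "r \<ge> 1" "A \<subseteq> {..<n}"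
  shows "set_pmf (Pi_pmf A 0 (sample_pos r p)) \<subseteq> search_space r n"
proof
  fix g
  assume "g \<in> set_pmf (Pi_pmf A 0 (sample_pos r p))"
  then have g: "g \<in> PiE_dflt A 0 (set_pmf \<circ> sample_pos r p)"
    using assms(2) set_Pi_pmf_subset'[of A 0] finite_subset by blast
  have "g k < r" for k
    using g set_pmf_sample_pos[OF assms(1)] assms(1) by (cases "k \<in> A") (auto simp: PiE_dflt_def)
  moreover have "g k = 0" if "n \<le> k" for k
    using g assms(2) that by (auto simp: PiE_dflt_def)
  ultimately show "g \<in> search_space r n"
    by (simp add: search_space_def)
qed

lemma sample_split_pos:
  assumes "i < n"
  shows "sample r n p = map_pmf (\<lambda>(a, g). g(i := a))
           (pair_pmf (sample_pos r p i) (Pi_pmf ({..<n} - {i}) 0 (sample_pos r p)))"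
proof -
  have "{..<n} = insert i ({..<n} - {i})"
    using assms by auto
  then show ?thesis
    unfolding sample_def by (metis Pi_pmf_insert finite_Diff finite_lessThan Diff_iff insertI1)
qed

lemma neutral_posD:
  assumes "neutral_pos r n f i" "g \<in> search_space r n" "i < n" "a < r"
  shows "f (g(i := a)) = f g"
proof -
  have "g(i := a) \<in> search_space r n"
    using assms(2-4) by (auto simp: search_space_def)
  then show ?thesis
    using assms(1,2) unfolding neutral_pos_def by (metis fun_upd_other)
qed

lemma nn_integral_sample_pair_split:
  fixes r n i :: nat and p :: freqs
  assumes "i < n"
  defines "P \<equiv> sample_pos r p i" and "R \<equiv> Pi_pmf ({..<n} - {i}) 0 (sample_pos r p)"
  shows "(\<integral>\<^sup>+x. \<integral>\<^sup>+y. F x y \<partial>sample r n p \<partial>sample r n p) =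
         (\<integral>\<^sup>+g. \<integral>\<^sup>+g'. \<integral>\<^sup>+a. \<integral>\<^sup>+b. F (g(i := a)) (g'(i := b)) \<partial>P \<partial>P \<partial>R \<partial>R)"
proof -
  have "(\<integral>\<^sup>+x. \<integral>\<^sup>+y. F x y \<partial>sample r n p \<partial>sample r n p) =
      (\<integral>\<^sup>+a. \<integral>\<^sup>+g. \<integral>\<^sup>+b. \<integral>\<^sup>+g'. F (g(i := a)) (g'(i := b)) \<partial>R \<partial>P \<partial>R \<partial>P)"
    unfolding sample_split_pos[OF assms(1)] P_def R_def by (simp add: nn_integral_pair_pmf')
  also have "\<dots> = (\<integral>\<^sup>+g. \<integral>\<^sup>+a. \<integral>\<^sup>+b. \<integral>\<^sup>+g'. F (g(i := a)) (g'(i := b)) \<partial>R \<partial>P \<partial>P \<partial>R)"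
    by (rule nn_integral_pmf_swap)
  also have "\<dots> = (\<integral>\<^sup>+g. \<integral>\<^sup>+a. \<integral>\<^sup>+g'. \<integral>\<^sup>+b. F (g(i := a)) (g'(i := b)) \<partial>P \<partial>R \<partial>P \<partial>R)"
    by (intro nn_integral_cong nn_integral_pmf_swap)
  also have "\<dots> = (\<integral>\<^sup>+g. \<integral>\<^sup>+g'. \<integral>\<^sup>+a. \<integral>\<^sup>+b. F (g(i := a)) (g'(i := b)) \<partial>P \<partial>P \<partial>R \<partial>R)"
    by (intro nn_integral_cong nn_integral_pmf_swap)
  finally show ?thesis .
qed

text \<open>No hypothesis on K is needed: for K = 0 division by zero makes both the increment and
  the exponent vanish.\<close>
lemma cga_step_increment_mgf_le:
  assumes "r \<ge> 1" "i < n" "neutral_pos r n f i"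
  shows "(\<integral>\<^sup>+p'. ennreal (exp (u * (p' i j - p i j))) \<partial>cga_step r n K f p)
           \<le> ennreal (exp (u\<^sup>2 / (2 * K\<^sup>2)))"
proof -
  define v where "v = u / K"
  define P where "P = sample_pos r p i"
  define R where "R = Pi_pmf ({..<n} - {i}) 0 (sample_pos r p)"
  define I where "I = (\<lambda>w a b. ennreal (exp (w * (of_bool (a = j) - of_bool (b = j)))))"
  have neutral: "f (g(i := a)) = f g" if "g \<in> set_pmf R" "a \<in> set_pmf P" for g a
  proof (rule neutral_posD[OF assms(3) _ assms(2)])
    show "g \<in> search_space r n"
      using that(1) set_pmf_Pi_pmf_sample_pos[OF assms(1), of "{..<n} - {i}"] by (auto simp: R_def)
    show "a < r"
      using that(2) set_pmf_sample_pos[OF assms(1)] by (auto simp: P_def)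
  qed
  have "(\<integral>\<^sup>+p'. ennreal (exp (u * (p' i j - p i j))) \<partial>cga_step r n K f p) =
      (\<integral>\<^sup>+x. \<integral>\<^sup>+y. I (if f x < f y then - v else v) (x i) (y i) \<partial>sample r n p \<partial>sample r n p)"
    unfolding cga_step_def I_def v_def
    by (simp add: Let_def case_prod_beta) (intro nn_integral_cong; simp add: diff_divide_distrib)
  also have "\<dots> = (\<integral>\<^sup>+g. \<integral>\<^sup>+g'. \<integral>\<^sup>+a. \<integral>\<^sup>+b.
      I (if f (g(i := a)) < f (g'(i := b)) then - v else v) a b \<partial>P \<partial>P \<partial>R \<partial>R)"
    unfolding nn_integral_sample_pair_split[OF assms(2)] P_def R_def by simp
  also have "\<dots> = (\<integral>\<^sup>+g. \<integral>\<^sup>+g'. \<integral>\<^sup>+a. \<integral>\<^sup>+b.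
      I (if f g < f g' then - v else v) a b \<partial>P \<partial>P \<partial>R \<partial>R)"
    by (intro nn_integral_cong_AE AE_pmfI) (simp add: neutral)
  also have "\<dots> \<le> (\<integral>\<^sup>+g. \<integral>\<^sup>+g'. ennreal (exp (v\<^sup>2 / 2)) \<partial>R \<partial>R)"
    unfolding I_def
    using nn_integral_exp_indicator_diff_pmf_le[where P = P and v = v]
      nn_integral_exp_indicator_diff_pmf_le[where P = P and v = "- v"]
    by (intro nn_integral_mono) simp
  also have "\<dots> = ennreal (exp (u\<^sup>2 / (2 * K\<^sup>2)))"
    by (simp add: v_def power_divide)
  finally show ?thesis .
qed

fun stop_at_level :: "real \<Rightarrow> (nat \<Rightarrow> real) \<Rightarrow> nat \<Rightarrow> real" where
  "stop_at_level l X 0 = X 0"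
| "stop_at_level l X (Suc t) =
     (if l \<le> stop_at_level l X t then stop_at_level l X t else X (Suc t))"

lemma stop_at_level_ge: "t \<le> T \<Longrightarrow> l \<le> X t \<Longrightarrow> l \<le> stop_at_level l X T"
  by (induction T) (auto simp: le_Suc_eq)

lemma stop_at_level_cases: "l \<le> stop_at_level l X T \<or> stop_at_level l X T = X T"
  by (cases T) auto

lemma stop_at_level_cong:
  "(\<And>t. t \<le> T \<Longrightarrow> X t = Y t) \<Longrightarrow> stop_at_level l X T = stop_at_level l Y T"
  by (induction T) auto

definition deviation :: "real \<Rightarrow> nat \<Rightarrow> nat \<Rightarrow> freqs list \<Rightarrow> nat \<Rightarrow> real" where
  "deviation \<sigma> i j hs t = \<sigma> * ((hs ! t) i j - (hs ! 0) i j)"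

lemma max_abs_deviation_ge_imp_stopped:
  assumes "l \<le> Max ((\<lambda>t. \<bar>(hs ! t) i j - (hs ! 0) i j\<bar>) ` {0..T})"
  shows "l \<le> stop_at_level l (deviation 1 i j hs) T \<or> l \<le> stop_at_level l (deviation (- 1) i j hs) T"
proof -
  have "Max ((\<lambda>t. \<bar>(hs ! t) i j - (hs ! 0) i j\<bar>) ` {0..T})
      \<in> (\<lambda>t. \<bar>(hs ! t) i j - (hs ! 0) i j\<bar>) ` {0..T}"
    by (intro Max_in) auto
  then obtain t where t: "t \<le> T"
    and "Max ((\<lambda>t. \<bar>(hs ! t) i j - (hs ! 0) i j\<bar>) ` {0..T}) = \<bar>(hs ! t) i j - (hs ! 0) i j\<bar>"
    by (meson atLeastAtMost_iff imageE)
  with assms have "l \<le> \<bar>(hs ! t) i j - (hs ! 0) i j\<bar>"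
    by simp
  then consider "l \<le> deviation 1 i j hs t" | "l \<le> deviation (- 1) i j hs t"
    by (cases "(hs ! t) i j - (hs ! 0) i j \<ge> 0") (auto simp: deviation_def)
  then show ?thesis
    using stop_at_level_ge[OF t] by metis
qed

lemma length_cga_run: "hs \<in> set_pmf (cga_run r n K f T) \<Longrightarrow> length hs = Suc T"
  by (induction T arbitrary: hs) auto

lemma stopped_deviation_step_mgf_le:
  assumes "r \<ge> 1" "i < n" "neutral_pos r n f i" "length hs = Suc T"
  shows "(\<integral>\<^sup>+p'. ennreal (exp (s * stop_at_level l (deviation \<sigma> i j (hs @ [p'])) (Suc T)))
             \<partial>cga_step r n K f (last hs))
           \<le> ennreal (exp (s * stop_at_level l (deviation \<sigma> i j hs) T)) *
              ennreal (exp ((\<sigma> * s)\<^sup>2 / (2 * K\<^sup>2)))"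
proof -
  define S where "S = stop_at_level l (deviation \<sigma> i j hs) T"
  have prefix: "stop_at_level l (deviation \<sigma> i j (hs @ [p'])) T = S" for p'
    unfolding S_def using assms(4) by (intro stop_at_level_cong) (simp add: deviation_def nth_append)
  show ?thesis
  proof (cases "l \<le> S")
    case True
    have "1 \<le> ennreal (exp ((\<sigma> * s)\<^sup>2 / (2 * K\<^sup>2)))"
      by (simp add: ennreal_1[symmetric] del: ennreal_1)
    then have "ennreal (exp (s * S)) * 1 \<le> ennreal (exp (s * S)) * ennreal (exp ((\<sigma> * s)\<^sup>2 / (2 * K\<^sup>2)))"
      by (rule mult_left_mono) simp
    then show ?thesis
      using True by (simp add: prefix S_def[symmetric] measure_pmf.emeasure_space_1)
  next
    case False
    have "last hs = hs ! T"
      using assms(4) by (metis last_conv_nth diff_Suc_1 list.size(3) nat.distinct(1))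
    with False have S_eq: "S = \<sigma> * ((last hs) i j - (hs ! 0) i j)"
      using stop_at_level_cases[of l "deviation \<sigma> i j hs" T] by (simp add: S_def deviation_def)
    have next_value:
      "stop_at_level l (deviation \<sigma> i j (hs @ [p'])) (Suc T) = \<sigma> * (p' i j - (hs ! 0) i j)" for p'
      using False assms(4) by (simp add: prefix deviation_def nth_append)
    have "s * stop_at_level l (deviation \<sigma> i j (hs @ [p'])) (Suc T) =
        s * S + (\<sigma> * s) * (p' i j - (last hs) i j)" for p'
      unfolding next_value S_eq by (simp add: algebra_simps)
    then have "(\<integral>\<^sup>+p'. ennreal (exp (s * stop_at_level l (deviation \<sigma> i j (hs @ [p'])) (Suc T)))
        \<partial>cga_step r n K f (last hs)) = ennreal (exp (s * S)) *
        (\<integral>\<^sup>+p'. ennreal (exp ((\<sigma> * s) * (p' i j - (last hs) i j))) \<partial>cga_step r n K f (last hs))"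
      by (simp add: exp_add ennreal_mult nn_integral_cmult)
    also have "\<dots> \<le> ennreal (exp (s * S)) * ennreal (exp ((\<sigma> * s)\<^sup>2 / (2 * K\<^sup>2)))"
      by (intro mult_left_mono cga_step_increment_mgf_le[OF assms(1-3)]) simp
    finally show ?thesis
      unfolding S_def .
  qed
qed

lemma cga_run_stopped_mgf_le:
  assumes "r \<ge> 1" "i < n" "neutral_pos r n f i"
  shows "(\<integral>\<^sup>+hs. ennreal (exp (s * stop_at_level l (deviation \<sigma> i j hs) T)) \<partial>cga_run r n K f T)
           \<le> ennreal (exp (real T * ((\<sigma> * s)\<^sup>2 / (2 * K\<^sup>2))))"
proof (induction T)
  case 0
  show ?case by (simp add: deviation_def)
next
  case (Suc T)
  define c where "c = (\<sigma> * s)\<^sup>2 / (2 * K\<^sup>2)"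
  have "(\<integral>\<^sup>+hs. ennreal (exp (s * stop_at_level l (deviation \<sigma> i j hs) (Suc T)))
          \<partial>cga_run r n K f (Suc T)) =
      (\<integral>\<^sup>+hs. \<integral>\<^sup>+p'. ennreal (exp (s * stop_at_level l (deviation \<sigma> i j (hs @ [p'])) (Suc T)))
          \<partial>cga_step r n K f (last hs) \<partial>cga_run r n K f T)"
    by simp
  also have "\<dots> \<le> (\<integral>\<^sup>+hs. ennreal (exp (s * stop_at_level l (deviation \<sigma> i j hs) T)) *
      ennreal (exp c) \<partial>cga_run r n K f T)"
    unfolding c_def
    by (intro nn_integral_mono_AE AE_pmfI stopped_deviation_step_mgf_le[OF assms] length_cga_run)
  also have "\<dots> = (\<integral>\<^sup>+hs. ennreal (exp (s * stop_at_level l (deviation \<sigma> i j hs) T))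
      \<partial>cga_run r n K f T) * ennreal (exp c)"
    by (simp add: nn_integral_multc)
  also have "\<dots> \<le> ennreal (exp (real T * c)) * ennreal (exp c)"
    using Suc.IH unfolding c_def by (intro mult_right_mono) auto
  also have "\<dots> = ennreal (exp (real (Suc T) * c))"
    by (simp add: ennreal_mult[symmetric] algebra_simps flip: exp_add)
  finally show ?case
    unfolding c_def .
qed

lemma cga_run_stopped_tail_le:
  assumes "r \<ge> 1" "i < n" "neutral_pos r n f i" "K > 0" "\<sigma>\<^sup>2 = 1" "T > 0" "l > 0"
  shows "measure_pmf.prob (cga_run r n K f T) {hs. l \<le> stop_at_level l (deviation \<sigma> i j hs) T}
           \<le> exp (- (l\<^sup>2 * K\<^sup>2) / (2 * real T))"
proof -
  define s where "s = l * K\<^sup>2 / real T"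
  define M where "M = measure_pmf (cga_run r n K f T)"
  define Y where "Y = (\<lambda>hs. stop_at_level l (deviation \<sigma> i j hs) T)"
  have "s > 0"
    using assms(4,6,7) by (simp add: s_def)
  have square: "(\<sigma> * s)\<^sup>2 = s\<^sup>2"
    using assms(5) by (simp add: power_mult_distrib)
  have half: "real T * (s\<^sup>2 / (2 * K\<^sup>2)) = s * l / 2"
    using assms(4,6) by (simp add: s_def power2_eq_square)
  have "emeasure M {hs. l \<le> Y hs} \<le> ennreal (exp (- s * l)) * (\<integral>\<^sup>+hs. ennreal (exp (s * Y hs)) \<partial>M)"
    using Chernoff_ineq_nn_integral_ge[of s UNIV M Y l] \<open>s > 0\<close> by (simp add: M_def)
  also have "\<dots> \<le> ennreal (exp (- s * l)) * ennreal (exp (real T * ((\<sigma> * s)\<^sup>2 / (2 * K\<^sup>2))))"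
    unfolding M_def Y_def by (intro mult_left_mono cga_run_stopped_mgf_le[OF assms(1-3)]) simp
  also have "\<dots> = ennreal (exp (- (s * l) / 2))"
    unfolding square half by (simp add: ennreal_mult[symmetric] flip: exp_add)
  also have "- (s * l) / 2 = - (l\<^sup>2 * K\<^sup>2) / (2 * real T)"
    by (simp add: s_def power2_eq_square mult_ac)
  finally show ?thesis
    by (simp add: M_def Y_def measure_pmf.emeasure_eq_measure)
qed

lemma cga_run_max_deviation_tail_le:
  assumes "r \<ge> 1" "i < n" "neutral_pos r n f i" "K > 0" "T > 0" "l > 0"
  shows "measure_pmf.prob (cga_run r n K f T)
           {hs. Max ((\<lambda>t. \<bar>(hs ! t) i j - (hs ! 0) i j\<bar>) ` {0..T}) \<ge> l}
         \<le> 2 * exp (- (l\<^sup>2 * K\<^sup>2) / (2 * real T))"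
proof -
  let ?M = "cga_run r n K f T"
  let ?B = "\<lambda>\<sigma>. {hs. l \<le> stop_at_level l (deviation \<sigma> i j hs) T}"
  have "{hs. Max ((\<lambda>t. \<bar>(hs ! t) i j - (hs ! 0) i j\<bar>) ` {0..T}) \<ge> l} \<subseteq> ?B 1 \<union> ?B (- 1)"
    using max_abs_deviation_ge_imp_stopped[where l = l] by blast
  then have "measure_pmf.prob ?M
      {hs. Max ((\<lambda>t. \<bar>(hs ! t) i j - (hs ! 0) i j\<bar>) ` {0..T}) \<ge> l}
      \<le> measure_pmf.prob ?M (?B 1 \<union> ?B (- 1))"
    by (intro measure_pmf.finite_measure_mono) simp_all
  also have "\<dots> \<le> measure_pmf.prob ?M (?B 1) + measure_pmf.prob ?M (?B (- 1))"
    by (intro measure_Un_le) simp_all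
  also have "\<dots> \<le> 2 * exp (- (l\<^sup>2 * K\<^sup>2) / (2 * real T))"
    using cga_run_stopped_tail_le[OF assms(1-4) _ assms(5,6), of 1 j]
      cga_run_stopped_tail_le[OF assms(1-4) _ assms(5,6), of "- 1" j] by simp
  finally show ?thesis .
qed

theorem theorem2:
  fixes n r :: nat and K :: real and f :: "point \<Rightarrow> real" and i j T :: nat
  assumes "n \<ge> 1" and "r \<ge> 2" and "K > 0"
    and "i < n" and "neutral_pos r n f i"
    and "j < r"
  shows "measure_pmf.prob (cga_run r n K f T)
           {hs. Max ((\<lambda>t. \<bar>(hs ! t) i j - (hs ! 0) i j\<bar>) ` {0..T}) \<ge> 1 / (2 * real r)}
         \<le> 2 * exp (- (K ^ 2) / (8 * real T * (real r) ^ 2))"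
proof (cases "T = 0")
  case True
  \<comment> \<open>the bound is 2 * exp 0, since division by zero yields 0\<close>
  then show ?thesis by simp
next
  case False
  have "- ((1 / (2 * real r))\<^sup>2 * K\<^sup>2) / (2 * real T) = - (K ^ 2) / (8 * real T * (real r) ^ 2)"
    by (simp add: power_divide power_mult_distrib)
  then show ?thesis
    using cga_run_max_deviation_tail_le[of r i n f K T "1 / (2 * real r)" j] assms False by simp
qed

end
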